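(* Let $(\mathfrak g,r)$ be a triangular Lie bialgebra such that $r:\mathfrak g^*\to\mathfrak g$ is invertible. For $\lambda_1,\lambda_2,\lambda_3,\lambda_4\in\mathbb R$ define $N=N_{\lambda_1,\lambda_2,\lambda_3,\lambda_4}:\mathcal D(\mathfrak g)\to\mathcal D(\mathfrak g)$ by $N(x,a^* )=(\lambda_1r(a^* )+\lambda_2x,\ \lambda_3r^{-1}(x)+\lambda_4a^* )$. Then $N$ is a Nijenhuis tensor on $\mathcal D(\mathfrak g)$: $[N(X),N(Y)]+N^2([X,Y])=N([N(X),Y]+[X,N(Y)])$ for all $X,Y\in\mathcal D(\mathfrak g)$.
   Context: $\mathfrak g$ a finite-dimensional real Lie algebra; $r\in\mathfrak g\otimes\mathfrak g$ identified with $r:\mathfrak g^*\to\mathfrak g$ via $\langle r(a^* ),b^*\rangle=\langle a^*\otimes b^*,r\rangle$. $(\mathfrak g,r)$ triangular means $r$ is skew-symmetric and satisfies the CYBE $[r_{12},r_{13}]+[r_{12},r_{23}]+[r_{13},r_{23}]=0$ (for $r=\sum a_i\otimes b_i$: $[r_{12},r_{13}]=\sum[a_i,a_j]\otimes b_i\otimes b_j$, $[r_{12},r_{23}]=\sum a_i\otimes[b_i,a_j]\otimes b_j$, $[r_{13},r_{23}]=\sum a_i\otimes a_j\otimes[b_i,b_j]$). Coadjoint action $\langle\mathrm{ad}^*(x)a^*,y\rangle=-\langle a^*,[x,y]\rangle$. Put $[a^*,b^*]_\delta=\mathrm{ad}^*(r(a^* ))b^*-\mathrm{ad}^*(r(b^*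 ))a^*$ on $\mathfrak g^*$ and, for $a^*\in\mathfrak g^*,x\in\mathfrak g$, $\langle\mathrm{ad}^*(a^* )x,b^*\rangle=-\langle x,[a^*,b^*]_\delta\rangle$. The Drinfeld double $\mathcal D(\mathfrak g)=\mathfrak g\oplus\mathfrak g^*$ has bracket $[(x,a^* ),(y,b^* )]=([x,y]+\mathrm{ad}^*(a^* )y-\mathrm{ad}^*(b^* )x,\ [a^*,b^*]_\delta+\mathrm{ad}^*(x)b^*-\mathrm{ad}^*(y)a^* )$. *)

theory Defs
  imports "HOL-Analysis.Analysis"
begin

text \<open>The finite-dimensional real Lie algebra g is modelled in a fixed basis
  as real^'n (basis vectors axis i 1); its dual g* is modelled as real^'n as well, with the
  dual basis, so the pairing of a covector a and a vector x is a \<bullet> x.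
  An element r = sum_{i,j} r_ij e_i (x) e_j of g (x) g is the matrix R with R$i$j = r_ij.\<close>

definition lie_algebra :: "(real^'n \<Rightarrow> real^'n \<Rightarrow> real^'n) \<Rightarrow> bool" where
  "lie_algebra br \<longleftrightarrow> bilinear br \<and> (\<forall>x. br x x = 0) \<and>
     (\<forall>x y z. br x (br y z) + br y (br z x) + br z (br x y) = 0)"

text \<open>r : g* -> g, determined by <r(a), b> = <a (x) b, r> = sum_{i,j} r_ij a_i b_j.\<close>
definition rmap :: "real^'n^'n \<Rightarrow> real^'n \<Rightarrow> real^'n" where
  "rmap R a = (\<chi> j. \<Sum>i\<in>UNIV. R$i$j * a$i)"

text \<open>Components (p,q,s) of [r12,r13], [r12,r23], [r13,r23] in the basis e_p (x) e_q (x) e_s.\<close>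
definition cybe12_13 :: "(real^'n \<Rightarrow> real^'n \<Rightarrow> real^'n) \<Rightarrow> real^'n^'n \<Rightarrow> 'n \<Rightarrow> 'n \<Rightarrow> 'n \<Rightarrow> real" where
  "cybe12_13 br R p q s = (\<Sum>i\<in>UNIV. \<Sum>k\<in>UNIV. R$i$q * R$k$s * (br (axis i 1) (axis k 1))$p)"

definition cybe12_23 :: "(real^'n \<Rightarrow> real^'n \<Rightarrow> real^'n) \<Rightarrow> real^'n^'n \<Rightarrow> 'n \<Rightarrow> 'n \<Rightarrow> 'n \<Rightarrow> real" where
  "cybe12_23 br R p q s = (\<Sum>j\<in>UNIV. \<Sum>k\<in>UNIV. R$p$j * R$k$s * (br (axis j 1) (axis k 1))$q)"

definition cybe13_23 :: "(real^'n \<Rightarrow> real^'n \<Rightarrow> real^'n) \<Rightarrow> real^'n^'n \<Rightarrow> 'n \<Rightarrow> 'n \<Rightarrow> 'n \<Rightarrow> real" where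
  "cybe13_23 br R p q s = (\<Sum>j\<in>UNIV. \<Sum>l\<in>UNIV. R$p$j * R$q$l * (br (axis j 1) (axis l 1))$s)"

definition triangular :: "(real^'n \<Rightarrow> real^'n \<Rightarrow> real^'n) \<Rightarrow> real^'n^'n \<Rightarrow> bool" where
  "triangular br R \<longleftrightarrow> transpose R = - R \<and>
     (\<forall>p q s. cybe12_13 br R p q s + cybe12_23 br R p q s + cybe13_23 br R p q s = 0)"

text \<open>Coadjoint action of g on g*: <ad*(x) a, y> = - <a, [x,y]>.\<close>
definition coad :: "(real^'n \<Rightarrow> real^'n \<Rightarrow> real^'n) \<Rightarrow> real^'n \<Rightarrow> real^'n \<Rightarrow> real^'n" where
  "coad br x a = (\<chi> i. - (a \<bullet> br x (axis i 1)))"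

definition dbr :: "(real^'n \<Rightarrow> real^'n \<Rightarrow> real^'n) \<Rightarrow> real^'n^'n \<Rightarrow> real^'n \<Rightarrow> real^'n \<Rightarrow> real^'n" where
  "dbr br R a b = coad br (rmap R a) b - coad br (rmap R b) a"

text \<open>Coadjoint action of g* on g: <ad*(a) x, b> = - <x, [a,b]_delta>.\<close>
definition coad_star :: "(real^'n \<Rightarrow> real^'n \<Rightarrow> real^'n) \<Rightarrow> real^'n^'n \<Rightarrow> real^'n \<Rightarrow> real^'n \<Rightarrow> real^'n" where
  "coad_star br R a x = (\<chi> i. - (x \<bullet> dbr br R a (axis i 1)))"

definition double_br :: "(real^'n \<Rightarrow> real^'n \<Rightarrow> real^'n) \<Rightarrow> real^'n^'n \<Rightarrow>
    ((real^'n) \<times> (real^'n)) \<Rightarrow> ((real^'n) \<times> (real^'n)) \<Rightarrow> ((real^'n) \<times> (real^'n))" where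
  "double_br br R X Y = (case X of (x, a) \<Rightarrow> case Y of (y, b) \<Rightarrow>
     (br x y + coad_star br R a y - coad_star br R b x,
      dbr br R a b + coad br x b - coad br y a))"

definition Nten :: "real^'n^'n \<Rightarrow> real \<Rightarrow> real \<Rightarrow> real \<Rightarrow> real \<Rightarrow>
    ((real^'n) \<times> (real^'n)) \<Rightarrow> ((real^'n) \<times> (real^'n))" where
  "Nten R l1 l2 l3 l4 X = (case X of (x, a) \<Rightarrow>
     (l1 *\<^sub>R rmap R a + l2 *\<^sub>R x, l3 *\<^sub>R inv (rmap R) x + l4 *\<^sub>R a))"

end

theory Submission
  imports Defs
begin

(* Write r for rmap R and s for its inverse.  Two consequences of triangularity
   drive everything: r is skew (c . r d = - d . r c), and, by the classical Yang-Baxter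
   equation, r is a Lie algebra homomorphism from (g*, [.,.]_delta) to (g, [.,.]).
   Once r is invertible these let us rewrite both brackets on g and the action of g* on g
   through the coadjoint action of g alone, and the bracket of the double takes the form
     [X, Y] = L (sig X) Y - L (sig Y) X,     L w (x, a) = (r (ad*(w) (s x)), ad*(w) a),
   with sig (x, a) = x + r a.  Every operator L w commutes with N, and the Nijenhuis
   identity holds for ANY additive N commuting with all L w, for any bracket of this shape
   (lemma nijenhuis_of_commuting_actions). *)

section \<open>An abstract Nijenhuis criterion\<close>

lemma nijenhuis_of_commuting_actions:
  fixes N :: "'v::ab_group_add \<Rightarrow> 'v" and L :: "'w \<Rightarrow> 'v \<Rightarrow> 'v" and sig :: "'v \<Rightarrow> 'w"
  assumes bracket: "\<And>X Y. B X Y = L (sig X) Y - L (sig Y) X"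
    and additive: "\<And>X Y. N (X + Y) = N X + N Y"
    and commute: "\<And>w Z. N (L w Z) = L w (N Z)"
  shows "B (N X) (N Y) + N (N (B X Y)) = N (B (N X) Y + B X (N Y))"
proof -
  have diff: "N (X - Y) = N X - N Y" for X Y
    using additive[of "X - Y" Y] by (simp add: eq_diff_eq)
  show ?thesis
    unfolding bracket by (simp only: additive diff commute) (simp add: algebra_simps)
qed

lemma rmap_add: "rmap R (a + b) = rmap R a + rmap R b"
  by (simp add: rmap_def vec_eq_iff distrib_left sum.distrib)

lemma rmap_scale: "rmap R (c *\<^sub>R a) = c *\<^sub>R rmap R a"
  by (simp add: rmap_def vec_eq_iff sum_distrib_left mult_ac)

lemma rmap_linear: "linear (rmap R)"
  by (simp add: linear_iff rmap_add rmap_scale)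

lemma rmap_axis: "rmap R (axis m 1) = R $ m"
  by (simp add: rmap_def vec_eq_iff axis_def if_distrib[of "\<lambda>t. _ * t"] cong: if_cong)

lemma coad_add_right: "coad br x (a + b) = coad br x a + coad br x b"
  by (simp add: coad_def vec_eq_iff inner_add_left)

lemma coad_scale_right: "coad br x (c *\<^sub>R a) = c *\<^sub>R coad br x a"
  by (simp add: coad_def vec_eq_iff)

lemma coad_add_left: "bilinear br \<Longrightarrow> coad br (x + y) a = coad br x a + coad br y a"
  by (simp add: coad_def vec_eq_iff bilinear_ladd inner_add_right)

lemma coad_scale_left: "bilinear br \<Longrightarrow> coad br (c *\<^sub>R x) a = c *\<^sub>R coad br x a"
  by (simp add: coad_def vec_eq_iff bilinear_lmul)

lemma br_component:
  fixes br :: "real^'n \<Rightarrow> real^'n \<Rightarrow> real^'n"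
  assumes "bilinear br"
  shows "br x y $ p = (\<Sum>i\<in>UNIV. \<Sum>k\<in>UNIV. x$i * y$k * br (axis i 1) (axis k 1) $ p)"
proof -
  have "br x y = br (\<Sum>i\<in>UNIV. x$i *\<^sub>R axis i 1) (\<Sum>k\<in>UNIV. y$k *\<^sub>R axis k 1)"
    using basis_expansion[of x] basis_expansion[of y] by (simp add: scalar_mult_eq_scaleR)
  also have "\<dots> = (\<Sum>i\<in>UNIV. \<Sum>k\<in>UNIV. (x$i * y$k) *\<^sub>R br (axis i 1) (axis k 1))"
    by (simp add: bilinear_sum[OF assms] bilinear_lmul[OF assms] bilinear_rmul[OF assms]
        sum.cartesian_product[symmetric] mult.commute del: UNIV_Times_UNIV)
  finally show ?thesis by simp
qed

lemma coad_inner: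
  assumes "bilinear br"
  shows "coad br w a \<bullet> v = - (a \<bullet> br w v)"
proof -
  have lin: "linear (br w)" using assms by (simp add: bilinear_def)
  have expand: "br w v = (\<Sum>j\<in>UNIV. v$j *\<^sub>R br w (axis j 1))"
  proof -
    have "br w v = br w (\<Sum>j\<in>UNIV. v$j *\<^sub>R axis j 1)"
      using basis_expansion[of v] by (simp add: scalar_mult_eq_scaleR)
    then show ?thesis by (simp add: linear_sum[OF lin] linear_scale[OF lin])
  qed
  have "coad br w a \<bullet> v = (\<Sum>j\<in>UNIV. - (a \<bullet> br w (axis j 1)) * v$j)"
    by (simp add: coad_def inner_vec_def)
  also have "\<dots> = - (a \<bullet> (\<Sum>j\<in>UNIV. v$j *\<^sub>R br w (axis j 1)))"
    by (simp add: inner_sum_right sum_negf[symmetric] mult_ac)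
  finally show ?thesis using expand by simp
qed

section \<open>Consequences of triangularity\<close>

lemma skew_entry:
  assumes "transpose R = - R"
  shows "R$j$i = - R$i$j"
proof -
  have "transpose R $ i $ j = (- R) $ i $ j" by (simp add: assms)
  then show ?thesis by (simp add: transpose_def)
qed

lemma skew_pairing:
  assumes "transpose R = - R"
  shows "c \<bullet> rmap R d = - (d \<bullet> rmap R c)"
proof -
  have "c \<bullet> rmap R d = (\<Sum>j\<in>UNIV. \<Sum>i\<in>UNIV. c$j * R$i$j * d$i)"
    by (simp add: inner_vec_def rmap_def sum_distrib_left mult_ac)
  also have "\<dots> = (\<Sum>i\<in>UNIV. \<Sum>j\<in>UNIV. - (d$i * R$j$i * c$j))"
  proof (subst sum.swap, intro sum.cong refl)
    fix i j
    show "c$j * R$i$j * d$i = - (d$i * R$j$i * c$j)"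
      using skew_entry[OF assms, of j i] by simp
  qed
  also have "\<dots> = - (d \<bullet> rmap R c)"
    by (simp add: inner_vec_def rmap_def sum_distrib_left sum_negf mult_ac)
  finally show ?thesis .
qed

lemma br_axis_component:
  fixes br :: "real^'n \<Rightarrow> real^'n \<Rightarrow> real^'n"
  assumes "bilinear br"
  shows "br x (axis j 1) $ p = (\<Sum>i\<in>UNIV. x$i * br (axis i 1) (axis j 1) $ p)"
proof -
  have lin: "linear (\<lambda>x. br x (axis j 1))" using assms by (simp add: bilinear_def)
  have "br x (axis j 1) = br (\<Sum>i\<in>UNIV. x$i *\<^sub>R axis i 1) (axis j 1)"
    using basis_expansion[of x] by (simp add: scalar_mult_eq_scaleR)
  also have "\<dots> = (\<Sum>i\<in>UNIV. x$i *\<^sub>R br (axis i 1) (axis j 1))"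
    by (simp add: linear_sum[OF lin] linear_scale[OF lin])
  finally show ?thesis by simp
qed

lemma rmap_dbr_axis_component:
  assumes b: "bilinear br" and sk: "transpose R = - R"
  shows "rmap R (dbr br R (axis m 1) (axis n 1)) $ q
           = - cybe12_13 br R m n q - cybe12_23 br R m n q"
proof -
  define c where "c i k p = br (axis i 1) (axis k 1) $ p" for i k p
  have dbr_comp: "dbr br R (axis m 1) (axis n 1) $ j
      = (\<Sum>i\<in>UNIV. R$n$i * c i j m) - (\<Sum>i\<in>UNIV. R$m$i * c i j n)" for j
    by (simp add: dbr_def coad_def rmap_axis inner_axis' c_def
        br_axis_component[OF b, of "R$m"] br_axis_component[OF b, of "R$n"])
  have first: "(\<Sum>j\<in>UNIV. R$j$q * (\<Sum>i\<in>UNIV. R$n$i * c i j m)) = - cybe12_13 br R m n q"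
  proof -
    have "(\<Sum>j\<in>UNIV. R$j$q * (\<Sum>i\<in>UNIV. R$n$i * c i j m))
        = (\<Sum>j\<in>UNIV. \<Sum>i\<in>UNIV. - (R$i$n * R$j$q * c i j m))"
      unfolding sum_distrib_left by (intro sum.cong refl) (simp add: skew_entry[OF sk, of n])
    also have "\<dots> = - (\<Sum>i\<in>UNIV. \<Sum>j\<in>UNIV. R$i$n * R$j$q * c i j m)"
      by (subst sum.swap) (simp add: sum_negf)
    finally show ?thesis by (simp add: cybe12_13_def c_def)
  qed
  have second: "(\<Sum>j\<in>UNIV. R$j$q * (\<Sum>i\<in>UNIV. R$m$i * c i j n)) = cybe12_23 br R m n q"
  proof -
    have "(\<Sum>j\<in>UNIV. R$j$q * (\<Sum>i\<in>UNIV. R$m$i * c i j n))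
        = (\<Sum>i\<in>UNIV. \<Sum>j\<in>UNIV. R$m$i * R$j$q * c i j n)"
      unfolding sum_distrib_left by (subst sum.swap) (simp add: mult_ac)
    then show ?thesis by (simp add: cybe12_23_def c_def)
  qed
  have "rmap R (dbr br R (axis m 1) (axis n 1)) $ q
      = (\<Sum>j\<in>UNIV. R$j$q * (\<Sum>i\<in>UNIV. R$n$i * c i j m))
        - (\<Sum>j\<in>UNIV. R$j$q * (\<Sum>i\<in>UNIV. R$m$i * c i j n))"
    by (simp add: rmap_def dbr_comp right_diff_distrib sum_subtractf)
  then show ?thesis using first second by simp
qed

text \<open>The CYBE makes r a homomorphism from (g*, [.,.]_delta) to (g, [.,.]); first on basis
  covectors, then by bilinearity everywhere.\<close>

lemma rmap_dbr_axis:
  assumes b: "bilinear br" and t: "triangular br R"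
  shows "rmap R (dbr br R (axis m 1) (axis n 1)) = br (R$m) (R$n)"
  unfolding vec_eq_iff
proof
  fix q
  have sk: "transpose R = - R"
    and cybe: "cybe12_13 br R m n q + cybe12_23 br R m n q + cybe13_23 br R m n q = 0"
    using t unfolding triangular_def by blast+
  have "br (R$m) (R$n) $ q = cybe13_23 br R m n q"
    by (simp add: br_component[OF b, of "R$m" "R$n"] cybe13_23_def)
  then show "rmap R (dbr br R (axis m 1) (axis n 1)) $ q = br (R$m) (R$n) $ q"
    using cybe rmap_dbr_axis_component[OF b sk, of m n q] by linarith
qed

lemma dbr_bilinear:
  assumes b: "bilinear br"
  shows "bilinear (dbr br R)"
  unfolding bilinear_def linear_iff dbr_def
  by (simp add: coad_add_left[OF b] coad_add_right coad_scale_left[OF b] coad_scale_right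
      rmap_add rmap_scale algebra_simps)

lemma rmap_dbr:
  fixes br :: "real^'n \<Rightarrow> real^'n \<Rightarrow> real^'n"
  assumes b: "bilinear br" and t: "triangular br R"
  shows "rmap R (dbr br R a c) = br (rmap R a) (rmap R c)"
proof -
  have d: "bilinear (dbr br R)" by (rule dbr_bilinear[OF b])
  have lhs: "bilinear (\<lambda>a c. rmap R (dbr br R a c))"
    unfolding bilinear_def linear_iff
    by (simp add: bilinear_ladd[OF d] bilinear_radd[OF d] bilinear_lmul[OF d]
        bilinear_rmul[OF d] rmap_add rmap_scale)
  have rhs: "bilinear (\<lambda>a c. br (rmap R a) (rmap R c))"
    unfolding bilinear_def linear_iff
    by (simp add: bilinear_ladd[OF b] bilinear_radd[OF b] bilinear_lmul[OF b]
        bilinear_rmul[OF b] rmap_add rmap_scale)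
  have "(\<lambda>a c. rmap R (dbr br R a c)) = (\<lambda>a c. br (rmap R a) (rmap R c))"
  proof (rule bilinear_eq_stdbasis[OF lhs rhs])
    fix i j :: "real^'n" assume "i \<in> Basis" "j \<in> Basis"
    then obtain m n where "i = axis m 1" "j = axis n 1" using axis_inverse by metis
    then show "rmap R (dbr br R i j) = br (rmap R i) (rmap R j)"
      using rmap_dbr_axis[OF b t, of m n] by (simp add: rmap_axis)
  qed
  then show ?thesis by metis
qed

section \<open>The double of a triangular Lie bialgebra with invertible r\<close>

text \<open>The operators L w on D(g) = g (+) g* and the map sig : D(g) -> g through which the bracket
  of the double factors once r is invertible.\<close>

definition double_action :: "(real^'n \<Rightarrow> real^'n \<Rightarrow> real^'n) \<Rightarrow> real^'n^'n \<Rightarrow> real^'n \<Rightarrow>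
    ((real^'n) \<times> (real^'n)) \<Rightarrow> ((real^'n) \<times> (real^'n))" where
  "double_action br R w Z = (rmap R (coad br w (inv (rmap R) (fst Z))), coad br w (snd Z))"

definition anchor :: "real^'n^'n \<Rightarrow> ((real^'n) \<times> (real^'n)) \<Rightarrow> real^'n" where
  "anchor R Z = fst Z + rmap R (snd Z)"

locale invertible_triangular =
  fixes br :: "real^'n \<Rightarrow> real^'n \<Rightarrow> real^'n" and R :: "real^'n^'n"
  assumes bilinear: "bilinear br" and triangular: "triangular br R" and invertible: "bij (rmap R)"
begin

abbreviation r :: "real^'n \<Rightarrow> real^'n" where "r \<equiv> rmap R"
abbreviation s :: "real^'n \<Rightarrow> real^'n" where "s \<equiv> inv (rmap R)"

lemma skew: "transpose R = - R"
  using triangular by (simp add: triangular_def)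

lemma r_s [simp]: "r (s x) = x"
  using invertible by (simp add: bij_is_surj surj_f_inv_f)

lemma s_r [simp]: "s (r x) = x"
  using invertible by (simp add: bij_is_inj inv_f_f)

lemma s_linear: "linear s"
  using inj_linear_imp_inv_linear[OF rmap_linear] invertible bij_is_inj by blast

text \<open>Transporting the homomorphism property through s expresses the bracket of g by the
  coadjoint action.\<close>

lemma br_via_coad: "br x y = r (coad br x (s y)) - r (coad br y (s x))"
proof -
  have "br x y = br (r (s x)) (r (s y))" by simp
  also have "\<dots> = r (dbr br R (s x) (s y))" by (rule rmap_dbr[OF bilinear triangular, symmetric])
  finally show ?thesis by (simp add: dbr_def linear_diff[OF rmap_linear])
qed

lemma coad_star_via_coad: "coad_star br R a y = r (coad br (r a) (s y))"
  unfolding vec_eq_iff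
proof
  fix i
  have "r (coad br (r a) (s y)) $ i = - (coad br (r a) (s y) \<bullet> r (axis i 1))"
    using skew_pairing[OF skew, of "axis i 1"] by (simp add: inner_axis' rmap_axis)
  also have "\<dots> = s y \<bullet> br (r a) (r (axis i 1))" by (simp add: coad_inner[OF bilinear])
  also have "\<dots> = s y \<bullet> r (dbr br R a (axis i 1))" by (simp add: rmap_dbr[OF bilinear triangular])
  also have "\<dots> = - (dbr br R a (axis i 1) \<bullet> y)" by (simp add: skew_pairing[OF skew])
  finally show "coad_star br R a y $ i = r (coad br (r a) (s y)) $ i"
    by (simp add: coad_star_def inner_commute)
qed

lemma double_br_decomposition:
  "double_br br R X Y = double_action br R (anchor R X) Y - double_action br R (anchor R Y) X"
proof -
  obtain x a y c where "X = (x, a)" "Y = (y, c)" by (cases X, cases Y)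
  then show ?thesis
    unfolding double_br_def double_action_def anchor_def
    by (simp add: br_via_coad coad_star_via_coad dbr_def coad_add_left[OF bilinear]
        rmap_add linear_diff[OF rmap_linear])
qed

lemma Nten_add: "Nten R l1 l2 l3 l4 (Z + W) = Nten R l1 l2 l3 l4 Z + Nten R l1 l2 l3 l4 W"
  by (cases Z, cases W) (simp add: Nten_def linear_add[OF s_linear] rmap_add algebra_simps)

text \<open>N commutes with every L w: each component of N is built from r, s and scalars, and
  L w acts on g through r ad*(w) s and on g* through ad*(w).\<close>

lemma Nten_commutes_double_action:
  "Nten R l1 l2 l3 l4 (double_action br R w Z) = double_action br R w (Nten R l1 l2 l3 l4 Z)"
  by (cases Z) (simp add: Nten_def double_action_def linear_add[OF s_linear]
      linear_scale[OF s_linear] coad_add_right coad_scale_right rmap_add rmap_scale)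

end

text \<open>Lemma 4.8: N is a Nijenhuis tensor on the double.\<close>

theorem lemma4p8:
  fixes br :: "real^'n \<Rightarrow> real^'n \<Rightarrow> real^'n" and R :: "real^'n^'n"
    and l1 l2 l3 l4 :: real and X Y :: "(real^'n) \<times> (real^'n)"
  assumes "lie_algebra br" and "triangular br R" and "bij (rmap R)"
  shows "double_br br R (Nten R l1 l2 l3 l4 X) (Nten R l1 l2 l3 l4 Y)
           + Nten R l1 l2 l3 l4 (Nten R l1 l2 l3 l4 (double_br br R X Y))
         = Nten R l1 l2 l3 l4 (double_br br R (Nten R l1 l2 l3 l4 X) Y
                                + double_br br R X (Nten R l1 l2 l3 l4 Y))"
proof -
  interpret invertible_triangular br R
    using assms by unfold_locales (simp_all add: lie_algebra_def)
  show ?thesis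
    by (intro nijenhuis_of_commuting_actions[where L = "double_action br R" and sig = "anchor R"]
        double_br_decomposition Nten_add Nten_commutes_double_action)
qed

end
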